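(* Let $s_0\le s_1\le\cdots\le s_t$ be positive numbers and define $a_k=\sum_{i=0}^k\frac{s_i}{s_k}$ for $k\le t$. Then \[ s_ta_t^2\le 2\sum_{k=0}^ts_ka_k. \] *)

theory Defs
  imports Main "HOL.Real"
begin

definition aseq :: "(nat \<Rightarrow> real) \<Rightarrow> nat \<Rightarrow> real" where
  "aseq s k = (\<Sum>i=0..k. s i / s k)"

end

theory Submission
  imports Defs
begin

text \<open>Writing \<open>S\<^sub>k = s\<^sub>0 + \<dots> + s\<^sub>k\<close>, we have \<open>s\<^sub>k a\<^sub>k = S\<^sub>k\<close> and
  \<open>s\<^sub>t a\<^sub>t\<^sup>2 = S\<^sub>t\<^sup>2 / s\<^sub>t\<close>, so the claim is \<open>S\<^sub>t\<^sup>2 / s\<^sub>t \<le> 2 (S\<^sub>0 + \<dots> + S\<^sub>t)\<close>.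
  This follows by induction on \<open>t\<close>: expanding \<open>S\<^sub>t = S\<^sub>t\<^sub>-\<^sub>1 + s\<^sub>t\<close> gives
  \<open>S\<^sub>t\<^sup>2 / s\<^sub>t = S\<^sub>t\<^sub>-\<^sub>1\<^sup>2 / s\<^sub>t + 2 S\<^sub>t\<^sub>-\<^sub>1 + s\<^sub>t\<close>, and monotonicity \<open>s\<^sub>t\<^sub>-\<^sub>1 \<le> s\<^sub>t\<close>
  bounds the first term by \<open>S\<^sub>t\<^sub>-\<^sub>1\<^sup>2 / s\<^sub>t\<^sub>-\<^sub>1\<close>.\<close>

lemma aseq_eq_sum_divide: "aseq s k = (\<Sum>i=0..k. s i) / s k"
  unfolding aseq_def by (simp add: sum_divide_distrib)

lemma mult_aseq_eq_sum: "s k \<noteq> 0 \<Longrightarrow> s k * aseq s k = (\<Sum>i=0..k. s i)"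
  by (simp add: aseq_eq_sum_divide)

lemma power2_add_divide_le:
  fixes a b x :: real
  assumes "0 < a" and "a \<le> b"
  shows "(x + b)\<^sup>2 / b \<le> x\<^sup>2 / a + 2 * (x + b)"
proof -
  have "x\<^sup>2 / b \<le> x\<^sup>2 / a"
    using assms by (intro divide_left_mono) auto
  moreover have "(x + b)\<^sup>2 / b = x\<^sup>2 / b + 2 * x + b"
    using assms by (simp add: power2_eq_square field_simps)
  ultimately show ?thesis
    using assms by simp
qed

lemma power2_partial_sum_divide_le:
  fixes s :: "nat \<Rightarrow> real"
  assumes "\<And>i. i \<le> n \<Longrightarrow> 0 < s i"
    and "\<And>i. i < n \<Longrightarrow> s i \<le> s (Suc i)"
  shows "(\<Sum>i=0..n. s i)\<^sup>2 / s n \<le> 2 * (\<Sum>k=0..n. \<Sum>i=0..k. s i)"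
  using assms
proof (induction n)
  case 0
  then show ?case by (simp add: power2_eq_square)
next
  case (Suc n)
  let ?S = "\<lambda>k. \<Sum>i=0..k. s i"
  have "(?S (Suc n))\<^sup>2 / s (Suc n) = (?S n + s (Suc n))\<^sup>2 / s (Suc n)"
    by simp
  also have "\<dots> \<le> (?S n)\<^sup>2 / s n + 2 * ?S (Suc n)"
    using power2_add_divide_le[of "s n" "s (Suc n)"] Suc.prems by simp
  also have "\<dots> \<le> 2 * (\<Sum>k=0..n. ?S k) + 2 * ?S (Suc n)"
    using Suc by simp
  also have "\<dots> = 2 * (\<Sum>k=0..Suc n. ?S k)"
    by simp
  finally show ?case .
qed

theorem lemma25:
  fixes s :: "nat \<Rightarrow> real" and t :: nat
  assumes pos: "\<And>i. i \<le> t \<Longrightarrow> s i > 0"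
    and mono: "\<And>i j. i \<le> j \<Longrightarrow> j \<le> t \<Longrightarrow> s i \<le> s j"
  shows "s t * (aseq s t)\<^sup>2 \<le> 2 * (\<Sum>k=0..t. s k * aseq s k)"
proof -
  have "s t * (aseq s t)\<^sup>2 = (\<Sum>i=0..t. s i)\<^sup>2 / s t"
    using pos[of t] by (simp add: aseq_eq_sum_divide power2_eq_square)
  also have "\<dots> \<le> 2 * (\<Sum>k=0..t. \<Sum>i=0..k. s i)"
    using pos mono by (intro power2_partial_sum_divide_le) auto
  also have "\<dots> = 2 * (\<Sum>k=0..t. s k * aseq s k)"
    using pos by (simp add: mult_aseq_eq_sum less_imp_neq[symmetric])
  finally show ?thesis .
qed

end
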